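(* Assume the standing hypotheses (H). If $\{u,v\}$ is a part of $G$ of size $2$, then $L(u)\cap L(v)=\varnothing$.
   Context: A list assignment $L$ assigns to each vertex $v$ a set $L(v)$ of colors; an $L$-coloring is a proper coloring $f$ with $f(v)\in L(v)$ for all $v$; $\mathrm{ch}$ denotes choice number and $\chi$ chromatic number. A part of a complete multipartite graph is one of its maximal stable sets. Standing hypotheses (H): $k\ge1$ and $n\ge 2k+2$ are integers; $G$ is a complete $k$-partite graph (exactly $k$ nonempty parts) on $n$ vertices; $L$ is a list assignment for $G$ with $|L(v)|\ge\lceil (n+k-1)/3\rceil$ for every vertex $v$; $G$ has no $L$-coloring; $\left|\bigcup_{v\in V(G)}L(v)\right|\le n-1$; and every graph $H$ with fewer than $n$ vertices satisfies $\mathrm{ch}(H)\le\max\{\chi(H),\lceil(|V(H)|+\chi(H)-1)/3\rceil\}$. *)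

theory Defs
  imports Complex_Main
begin

definition graph :: "'a set \<Rightarrow> ('a \<Rightarrow> 'a \<Rightarrow> bool) \<Rightarrow> bool" where
  "graph V E \<longleftrightarrow> finite V \<and>
     (\<forall>u v. E u v \<longrightarrow> u \<in> V \<and> v \<in> V \<and> u \<noteq> v \<and> E v u)"

definition proper_coloring :: "'a set \<Rightarrow> ('a \<Rightarrow> 'a \<Rightarrow> bool) \<Rightarrow> ('a \<Rightarrow> 'c) \<Rightarrow> bool" where
  "proper_coloring V E f \<longleftrightarrow> (\<forall>u\<in>V. \<forall>v\<in>V. E u v \<longrightarrow> f u \<noteq> f v)"

definition L_coloring :: "'a set \<Rightarrow> ('a \<Rightarrow> 'a \<Rightarrow> bool) \<Rightarrow> ('a \<Rightarrow> 'c set) \<Rightarrow> ('a \<Rightarrow> 'c) \<Rightarrow> bool" where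
  "L_coloring V E L f \<longleftrightarrow> proper_coloring V E f \<and> (\<forall>v\<in>V. f v \<in> L v)"

definition colorable :: "'a set \<Rightarrow> ('a \<Rightarrow> 'a \<Rightarrow> bool) \<Rightarrow> nat \<Rightarrow> bool" where
  "colorable V E k \<longleftrightarrow> (\<exists>f :: 'a \<Rightarrow> nat. proper_coloring V E f \<and> f ` V \<subseteq> {..<k})"

definition chromatic_number :: "'a set \<Rightarrow> ('a \<Rightarrow> 'a \<Rightarrow> bool) \<Rightarrow> nat" where
  "chromatic_number V E = (LEAST k. colorable V E k)"

definition choosable :: "'a set \<Rightarrow> ('a \<Rightarrow> 'a \<Rightarrow> bool) \<Rightarrow> nat \<Rightarrow> bool" where
  "choosable V E k \<longleftrightarrow> (\<forall>L :: 'a \<Rightarrow> nat set.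
      (\<forall>v\<in>V. finite (L v) \<and> card (L v) \<ge> k) \<longrightarrow> (\<exists>f. L_coloring V E L f))"

definition choice_number :: "'a set \<Rightarrow> ('a \<Rightarrow> 'a \<Rightarrow> bool) \<Rightarrow> nat" where
  "choice_number V E = (LEAST k. choosable V E k)"

definition stable :: "'a set \<Rightarrow> ('a \<Rightarrow> 'a \<Rightarrow> bool) \<Rightarrow> 'a set \<Rightarrow> bool" where
  "stable V E S \<longleftrightarrow> S \<subseteq> V \<and> (\<forall>u\<in>S. \<forall>v\<in>S. \<not> E u v)"

text \<open>A part of a complete multipartite graph: a maximal stable set.\<close>
definition is_part :: "'a set \<Rightarrow> ('a \<Rightarrow> 'a \<Rightarrow> bool) \<Rightarrow> 'a set \<Rightarrow> bool" where
  "is_part V E S \<longleftrightarrow> stable V E S \<and> (\<forall>T. stable V E T \<and> S \<subseteq> T \<longrightarrow> T = S)"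

definition complete_k_partite :: "'a set \<Rightarrow> ('a \<Rightarrow> 'a \<Rightarrow> bool) \<Rightarrow> nat \<Rightarrow> bool" where
  "complete_k_partite V E k \<longleftrightarrow> (\<exists>P. (\<forall>p\<in>P. p \<noteq> {} \<and> p \<subseteq> V) \<and> \<Union>P = V \<and>
      (\<forall>p\<in>P. \<forall>q\<in>P. p \<noteq> q \<longrightarrow> p \<inter> q = {}) \<and> finite P \<and> card P = k \<and>
      (\<forall>u v. E u v \<longleftrightarrow> u \<in> V \<and> v \<in> V \<and> \<not> (\<exists>p\<in>P. u \<in> p \<and> v \<in> p)))"

end

theory Submission
  imports Defs
begin

text \<open>If a colour c lay in both lists of the part {u, v}, colour u and v with c and delete c
  from all other lists. The rest of G is complete (k-1)-partite on n - 2 vertices, and its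
  lists, of size at least \<lceil>(n+k-1)/3\<rceil> - 1, are long enough for the bound assumed on smaller
  graphs; so G would have an L-colouring.\<close>

definition choice_bound_below :: "nat \<Rightarrow> bool" where
  "choice_bound_below n \<longleftrightarrow> (\<forall>(VH :: nat set) EH. graph VH EH \<and> card VH < n \<longrightarrow>
     int (choice_number VH EH) \<le> max (int (chromatic_number VH EH))
        \<lceil>(real (card VH) + real (chromatic_number VH EH) - 1) / 3\<rceil>)"

definition graph_iso ::
    "'a set \<Rightarrow> ('a \<Rightarrow> 'a \<Rightarrow> bool) \<Rightarrow> 'b set \<Rightarrow> ('b \<Rightarrow> 'b \<Rightarrow> bool) \<Rightarrow> ('a \<Rightarrow> 'b) \<Rightarrow> bool" where
  "graph_iso V E W F g \<longleftrightarrow> bij_betw g V W \<and> (\<forall>a\<in>V. \<forall>b\<in>V. F (g a) (g b) \<longleftrightarrow> E a b)"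

lemma L_coloring_greedy:
  assumes "finite V" "\<forall>x\<in>V. \<not> E x x" "\<forall>w\<in>V. finite (L w) \<and> card V \<le> card (L w)"
  shows "\<exists>f. L_coloring V E L f"
  using assms
proof (induction V rule: finite_induct)
  case empty
  then show ?case by (auto simp: L_coloring_def proper_coloring_def)
next
  case (insert x F)
  have "\<forall>w\<in>F. finite (L w) \<and> card F \<le> card (L w)"
    using insert by (metis card_insert_le insertCI le_trans)
  with insert obtain f where f: "L_coloring F E L f" by auto
  have "card (f ` F) < card (L x)"
    using card_image_le[OF \<open>finite F\<close>, of f] insert by auto
  then obtain c where c: "c \<in> L x" "c \<notin> f ` F"
    by (metis card_mono finite_imageI insert.hyps(1) leD subsetI)
  have "L_coloring (insert x F) E L (f(x := c))"
    using f c insert.prems \<open>x \<notin> F\<close> by (auto simp: L_coloring_def proper_coloring_def)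
  then show ?case by blast
qed

lemma choosable_mono: "choosable V E j \<Longrightarrow> j \<le> m \<Longrightarrow> choosable V E m"
  unfolding choosable_def by (meson le_trans)

lemma choosable_choice_number: "graph V E \<Longrightarrow> choosable V E (choice_number V E)"
  unfolding choice_number_def
proof (rule LeastI)
  assume "graph V E"
  then show "choosable V E (card V)"
    unfolding choosable_def using L_coloring_greedy[of V E] by (auto simp: graph_def)
qed

lemma chromatic_number_le: "colorable V E j \<Longrightarrow> chromatic_number V E \<le> j"
  unfolding chromatic_number_def by (rule Least_le)

lemma L_coloring_cong:
  "L_coloring V E L f \<Longrightarrow> (\<And>v. v \<in> V \<Longrightarrow> L v = L' v) \<Longrightarrow> L_coloring V E L' f"
  by (simp add: L_coloring_def)

text \<open>Choosability only speaks of natural-number colours; other colours are relabelled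
  injectively.\<close>
lemma choosable_L_coloring:
  fixes L :: "'a \<Rightarrow> 'c set"
  assumes "finite V" and ch: "choosable V E k"
    and lists: "\<forall>v\<in>V. finite (L v) \<and> k \<le> card (L v)"
  shows "\<exists>f. L_coloring V E L f"
proof -
  define C where "C = (\<Union>v\<in>V. L v)"
  have LC: "L v \<subseteq> C" if "v \<in> V" for v using that unfolding C_def by blast
  have "finite C" using assms unfolding C_def by auto
  then obtain h :: "'c \<Rightarrow> nat" where "bij_betw h C {0..<card C}"
    using ex_bij_betw_finite_nat by metis
  then have h: "inj_on h C" by (simp add: bij_betw_def)
  have "card (h ` L v) = card (L v)" if "v \<in> V" for v
    using card_image[OF inj_on_subset[OF h LC[OF that]]] .
  then have "\<forall>v\<in>V. finite (h ` L v) \<and> k \<le> card (h ` L v)"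
    using lists by simp
  then obtain fH where fH: "L_coloring V E (\<lambda>v. h ` L v) fH"
    using ch[unfolded choosable_def, THEN spec[of _ "\<lambda>v. h ` L v"], THEN mp] by blast
  have f: "inv_into C h (fH v) \<in> L v \<and> h (inv_into C h (fH v)) = fH v" if "v \<in> V" for v
  proof -
    have "fH v \<in> h ` L v" using fH that by (simp add: L_coloring_def)
    then obtain x where x: "x \<in> L v" "fH v = h x" ..
    have "x \<in> C" using x(1) LC[OF that] ..
    then show ?thesis using x by (simp add: inv_into_f_f[OF h])
  qed
  have "L_coloring V E L (\<lambda>v. inv_into C h (fH v))"
    unfolding L_coloring_def proper_coloring_def
  proof (intro conjI ballI impI)
    fix a b assume ab: "a \<in> V" "b \<in> V" "E a b"
    then have "fH a \<noteq> fH b" using fH unfolding L_coloring_def proper_coloring_def by blast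
    then show "inv_into C h (fH a) \<noteq> inv_into C h (fH b)" using f[OF ab(1)] f[OF ab(2)] by auto
  qed (simp add: f)
  then show ?thesis by blast
qed

lemma graph_iso_apply:
  assumes "graph_iso V E W F g" "a \<in> V"
  shows "g a \<in> W"
  using assms bij_betw_apply unfolding graph_iso_def by metis

lemma graph_iso_edge:
  assumes "graph_iso V E W F g" "a \<in> V" "b \<in> V"
  shows "F (g a) (g b) \<longleftrightarrow> E a b"
  using assms unfolding graph_iso_def by blast

lemma graph_iso_inv:
  assumes iso: "graph_iso V E W F g"
  shows "graph_iso W F V E (inv_into V g)"
proof -
  have bij: "bij_betw g V W" using iso graph_iso_def by blast
  then have inv: "bij_betw (inv_into V g) W V" by (rule bij_betw_inv_into)
  have "E (inv_into V g a) (inv_into V g b) \<longleftrightarrow> F a b" if "a \<in> W" "b \<in> W" for a b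
    using graph_iso_edge[OF iso bij_betw_apply[OF inv that(1)] bij_betw_apply[OF inv that(2)]]
      bij_betw_inv_into_right[OF bij that(1)] bij_betw_inv_into_right[OF bij that(2)] by simp
  with inv show ?thesis unfolding graph_iso_def by blast
qed

lemma L_coloring_pullback:
  assumes iso: "graph_iso V E W F g" and f: "L_coloring W F L f"
  shows "L_coloring V E (L \<circ> g) (f \<circ> g)"
  using f graph_iso_apply[OF iso] graph_iso_edge[OF iso]
  unfolding L_coloring_def proper_coloring_def by simp

lemma colorable_pullback:
  assumes iso: "graph_iso V E W F g" and "colorable W F j"
  shows "colorable V E j"
proof -
  obtain \<phi> :: "'b \<Rightarrow> nat" where \<phi>: "proper_coloring W F \<phi>" "\<phi> ` W \<subseteq> {..<j}"
    using assms(2) unfolding colorable_def by blast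
  have "proper_coloring V E (\<phi> \<circ> g)"
    using \<phi>(1) graph_iso_apply[OF iso] graph_iso_edge[OF iso]
    unfolding proper_coloring_def by simp
  moreover have "(\<phi> \<circ> g) ` V \<subseteq> {..<j}"
    using \<phi>(2) graph_iso_apply[OF iso] by auto
  ultimately show ?thesis unfolding colorable_def by blast
qed

lemma choosable_iso:
  assumes iso: "graph_iso V E W F g" and ch: "choosable V E k"
  shows "choosable W F k"
  unfolding choosable_def
proof (intro allI impI)
  fix L :: "'b \<Rightarrow> nat set"
  assume "\<forall>w\<in>W. finite (L w) \<and> k \<le> card (L w)"
  then have "\<forall>v\<in>V. finite ((L \<circ> g) v) \<and> k \<le> card ((L \<circ> g) v)"
    using graph_iso_apply[OF iso] by simp
  then obtain f where f: "L_coloring V E (L \<circ> g) f"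
    using ch[unfolded choosable_def, THEN spec[of _ "L \<circ> g"], THEN mp] by blast
  have bij: "bij_betw g V W" using iso graph_iso_def by blast
  have "L_coloring W F (L \<circ> g \<circ> inv_into V g) (f \<circ> inv_into V g)"
    using L_coloring_pullback[OF graph_iso_inv[OF iso] f] .
  moreover have "(L \<circ> g \<circ> inv_into V g) w = L w" if "w \<in> W" for w
    by (simp add: bij_betw_inv_into_right[OF bij that])
  ultimately have "L_coloring W F L (f \<circ> inv_into V g)" by (rule L_coloring_cong)
  then show "\<exists>f. L_coloring W F L f" by blast
qed

lemma ex_nat_graph_iso:
  assumes "finite W" "\<forall>a\<in>W. \<not> E a a" "\<forall>a\<in>W. \<forall>b\<in>W. E a b \<longrightarrow> E b a"
  shows "\<exists>(VH :: nat set) EH g. graph VH EH \<and> card VH = card W \<and> graph_iso VH EH W E g"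
proof -
  obtain h where "bij_betw h W {0..<card W}" using ex_bij_betw_finite_nat[OF assms(1)] by blast
  then have g: "bij_betw (inv_into W h) {0..<card W} W" by (rule bij_betw_inv_into)
  define EH where "EH = (\<lambda>a b. a < card W \<and> b < card W \<and> E (inv_into W h a) (inv_into W h b))"
  have giW: "inv_into W h a \<in> W" if "a < card W" for a
    using bij_betw_apply[OF g] that by simp
  have "\<forall>a b. EH a b \<longrightarrow> a \<in> {0..<card W} \<and> b \<in> {0..<card W} \<and> a \<noteq> b \<and> EH b a"
  proof (intro allI impI)
    fix a b assume "EH a b"
    then have "a < card W" "b < card W" "E (inv_into W h a) (inv_into W h b)"
      unfolding EH_def by simp_all
    then show "a \<in> {0..<card W} \<and> b \<in> {0..<card W} \<and> a \<noteq> b \<and> EH b a"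
      using assms(2,3) giW unfolding EH_def by auto
  qed
  then have "graph {0..<card W} EH" by (simp add: graph_def)
  moreover have "\<forall>a\<in>{0..<card W}. \<forall>b\<in>{0..<card W}.
      E (inv_into W h a) (inv_into W h b) \<longleftrightarrow> EH a b"
    unfolding EH_def by simp
  with g have "graph_iso {0..<card W} EH W E (inv_into W h)"
    unfolding graph_iso_def by blast
  ultimately show ?thesis by (intro exI[of _ "{0..<card W}"] exI[of _ EH]) auto
qed

lemma choosable_if_choice_bound_below:
  fixes VH :: "nat set"
  assumes bound: "choice_bound_below n" and "graph VH EH" "card VH < n"
    and col: "colorable VH EH j"
    and M: "max (int j) \<lceil>(real (card VH) + real j - 1) / 3\<rceil> \<le> int M"
  shows "choosable VH EH M"
proof -
  define \<chi> where "\<chi> = chromatic_number VH EH"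
  have "\<chi> \<le> j" using chromatic_number_le[OF col] \<chi>_def by simp
  then have "max (int \<chi>) \<lceil>(real (card VH) + real \<chi> - 1) / 3\<rceil>
      \<le> max (int j) \<lceil>(real (card VH) + real j - 1) / 3\<rceil>"
    by (intro max.mono ceiling_mono) (auto simp: divide_right_mono)
  moreover have "int (choice_number VH EH) \<le> max (int \<chi>) \<lceil>(real (card VH) + real \<chi> - 1) / 3\<rceil>"
    using bound assms(2,3) unfolding choice_bound_below_def \<chi>_def by blast
  ultimately have "choice_number VH EH \<le> M" using M by linarith
  then show ?thesis using choosable_mono choosable_choice_number[OF assms(2)] by blast
qed

lemma L_coloring_if_choice_bound_below:
  fixes L :: "'a \<Rightarrow> 'c set"
  assumes bound: "choice_bound_below n" and "graph V E" "W \<subseteq> V" "card W < n"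
    and col: "colorable W E j"
    and M: "max (int j) \<lceil>(real (card W) + real j - 1) / 3\<rceil> \<le> int M"
    and lists: "\<forall>w\<in>W. finite (L w) \<and> M \<le> card (L w)"
  shows "\<exists>f. L_coloring W E L f"
proof -
  have W: "finite W" "\<forall>a\<in>W. \<not> E a a" "\<forall>a\<in>W. \<forall>b\<in>W. E a b \<longrightarrow> E b a"
    using assms(2,3) finite_subset unfolding graph_def by auto
  obtain VH :: "nat set" and EH g
    where VH: "graph VH EH" "card VH = card W" and iso: "graph_iso VH EH W E g"
    using ex_nat_graph_iso[OF W] by blast
  have "choosable VH EH M"
    using choosable_if_choice_bound_below[OF bound VH(1) _ colorable_pullback[OF iso col]]
      VH(2) assms(4) M by simp
  then have "choosable W E M" by (rule choosable_iso[OF iso])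
  then show ?thesis by (rule choosable_L_coloring[OF W(1) _ lists])
qed

lemma colorable_by_stable_cover:
  assumes "finite Q" "card Q = j" "W \<subseteq> \<Union>Q" and stable: "\<forall>q\<in>Q. \<forall>a\<in>q. \<forall>b\<in>q. \<not> E a b"
  shows "colorable W E j"
proof -
  obtain idx where idx: "bij_betw idx Q {0..<j}"
    using ex_bij_betw_finite_nat[OF assms(1)] assms(2) by blast
  define block where "block = (\<lambda>w. SOME q. q \<in> Q \<and> w \<in> q)"
  have block: "block w \<in> Q \<and> w \<in> block w" if "w \<in> W" for w
    using someI_ex[of "\<lambda>q. q \<in> Q \<and> w \<in> q"] assms(3) that unfolding block_def by blast
  have "proper_coloring W E (idx \<circ> block)"
    unfolding proper_coloring_def
  proof (intro ballI impI)
    fix a b assume ab: "a \<in> W" "b \<in> W" "E a b"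
    show "(idx \<circ> block) a \<noteq> (idx \<circ> block) b"
    proof
      assume "(idx \<circ> block) a = (idx \<circ> block) b"
      then have "block a = block b"
        using block[OF ab(1)] block[OF ab(2)] idx inj_onD unfolding bij_betw_def by fastforce
      then show False using stable block[OF ab(1)] block[OF ab(2)] ab(3) by metis
    qed
  qed
  moreover have "(idx \<circ> block) ` W \<subseteq> {..<j}"
    using block bij_betw_apply[OF idx] by auto
  ultimately show ?thesis unfolding colorable_def by blast
qed

lemma is_part_pair_mem_partition:
  assumes E: "\<forall>a b. E a b \<longleftrightarrow> a \<in> V \<and> b \<in> V \<and> \<not> (\<exists>p\<in>P. a \<in> p \<and> b \<in> p)"
    and sub: "\<forall>p\<in>P. p \<subseteq> V" and part: "is_part V E {u, v}"
  shows "{u, v} \<in> P"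
proof -
  have "u \<in> V" "v \<in> V" "\<not> E u v" using part by (auto simp: is_part_def stable_def)
  then obtain p where p: "p \<in> P" "u \<in> p" "v \<in> p" using E by blast
  have "stable V E p" unfolding stable_def using E sub p(1) by blast
  then have "p = {u, v}" using part p unfolding is_part_def by blast
  with p show ?thesis by simp
qed

lemma colorable_Diff_part:
  assumes "complete_k_partite V E k" "is_part V E {u, v}"
  shows "colorable (V - {u, v}) E (k - 1)"
proof -
  obtain P where P: "\<forall>p\<in>P. p \<noteq> {} \<and> p \<subseteq> V" "\<Union>P = V" "finite P" "card P = k"
      "\<forall>a b. E a b \<longleftrightarrow> a \<in> V \<and> b \<in> V \<and> \<not> (\<exists>p\<in>P. a \<in> p \<and> b \<in> p)"
    using assms(1) unfolding complete_k_partite_def by blast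
  have "{u, v} \<in> P" using is_part_pair_mem_partition[OF P(5) _ assms(2)] P(1) by blast
  then have "card (P - {{u, v}}) = k - 1" using P(3,4) by simp
  moreover have "V - {u, v} \<subseteq> \<Union>(P - {{u, v}})" using P(2) by blast
  moreover have "\<forall>q\<in>P - {{u, v}}. \<forall>a\<in>q. \<forall>b\<in>q. \<not> E a b" using P(5) by blast
  ultimately show ?thesis using colorable_by_stable_cover[of "P - {{u, v}}"] P(3) by blast
qed

lemma L_coloring_extend_pair:
  assumes f: "L_coloring (V - {u, v}) E (\<lambda>w. L w - {c}) f"
    and c: "c \<in> L u" "c \<in> L v" and uv: "\<forall>a\<in>{u, v}. \<forall>b\<in>{u, v}. \<not> E a b"
  shows "L_coloring V E L (f(u := c, v := c))"
proof -
  define g where "g = f(u := c, v := c)"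
  have g: "g w = (if w \<in> {u, v} then c else f w)" for w unfolding g_def by simp
  have fL: "f w \<in> L w - {c}" if "w \<in> V" "w \<notin> {u, v}" for w
    using f that unfolding L_coloring_def by blast
  have "g a \<noteq> g b" if ab: "a \<in> V" "b \<in> V" "E a b" for a b
  proof (cases "a \<in> {u, v}")
    case True
    then have "b \<notin> {u, v}" using uv ab(3) by blast
    then show ?thesis using True fL[OF ab(2)] g by auto
  next
    case False
    show ?thesis
    proof (cases "b \<in> {u, v}")
      case True
      then show ?thesis using False fL[OF ab(1)] g by auto
    next
      case False2: False
      then show ?thesis using False f ab g unfolding L_coloring_def proper_coloring_def by simp
    qed
  qed
  moreover have "g w \<in> L w" if "w \<in> V" for w
    using fL[OF that] c g by auto
  ultimately show ?thesis unfolding g_def L_coloring_def proper_coloring_def by blast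
qed

lemma card_Diff_singleton_lower_bound:
  assumes "int (card A) \<ge> T" "T \<ge> 1"
  shows "finite (A - {c}) \<and> nat (T - 1) \<le> card (A - {c})"
proof -
  have "finite A" "nat (T - 1) \<le> card A - 1" using assms by (auto intro: card_ge_0_finite)
  then show ?thesis using card_Diff_singleton_if[of A c] by auto
qed

lemma ceiling_list_size_bound:
  fixes n k :: nat
  assumes "k \<ge> 1" "n \<ge> 2 * k + 2"
  shows "max (int (k - 1)) \<lceil>(real (n - 2) + real (k - 1) - 1) / 3\<rceil>
           \<le> int (nat (\<lceil>(real n + real k - 1) / 3\<rceil> - 1))"
proof -
  have n: "real n \<ge> 2 * real k + 2" using assms(2) by linarith
  have "\<lceil>(real n + real k - 1) / 3\<rceil> \<ge> 1" using n by (simp add: le_ceiling_iff)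
  then have e: "int (nat (\<lceil>(real n + real k - 1) / 3\<rceil> - 1)) = \<lceil>(real n + real k - 1) / 3 - 1\<rceil>"
    by simp
  have eq: "real (n - 2) + real (k - 1) - 1 = real n + real k - 4"
    using assms by (simp add: of_nat_diff)
  have "\<lceil>(real (n - 2) + real (k - 1) - 1) / 3\<rceil> \<le> \<lceil>(real n + real k - 1) / 3 - 1\<rceil>"
    unfolding eq by (intro ceiling_mono) (simp add: field_simps)
  moreover have "real (k - 1) \<le> (real n + real k - 1) / 3 - 1"
    using assms(1) n by (simp add: of_nat_diff)
  then have "int (k - 1) \<le> \<lceil>(real n + real k - 1) / 3 - 1\<rceil>"
    unfolding le_ceiling_iff of_int_of_nat_eq by linarith
  ultimately show ?thesis unfolding e by simp
qed

theorem corollary11: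
  fixes V :: "'a set" and E :: "'a \<Rightarrow> 'a \<Rightarrow> bool" and L :: "'a \<Rightarrow> 'c set"
    and n k :: nat and u v :: 'a
  assumes "k \<ge> 1" and "n \<ge> 2 * k + 2"
    and "graph V E" and "complete_k_partite V E k" and "card V = n"
    and "\<forall>w\<in>V. of_nat (card (L w)) \<ge> \<lceil>(real n + real k - 1) / 3\<rceil>"
    and "\<not> (\<exists>f. L_coloring V E L f)"
    and "card (\<Union>w\<in>V. L w) \<le> n - 1"
    and "\<forall>(VH :: nat set) EH. graph VH EH \<and> card VH < n \<longrightarrow>
           int (choice_number VH EH) \<le> max (int (chromatic_number VH EH))
              \<lceil>(real (card VH) + real (chromatic_number VH EH) - 1) / 3\<rceil>"
    and "is_part V E {u, v}" and "u \<noteq> v"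
  shows "L u \<inter> L v = {}"
proof (rule ccontr)
  assume "L u \<inter> L v \<noteq> {}"
  then obtain c where c: "c \<in> L u" "c \<in> L v" by auto
  define T where "T = \<lceil>(real n + real k - 1) / 3\<rceil>"
  define W where "W = V - {u, v}"
  have uv: "u \<in> V" "v \<in> V" "\<forall>a\<in>{u, v}. \<forall>b\<in>{u, v}. \<not> E a b"
    using assms(10) unfolding is_part_def stable_def by auto
  have card_W: "card W = n - 2"
    using assms(3,5,11) uv(1,2) unfolding W_def graph_def by (simp add: card_Diff_subset)
  have T: "T \<ge> 1" unfolding T_def using assms(1,2) by (simp add: le_ceiling_iff)
  have lists: "\<forall>w\<in>W. finite (L w - {c}) \<and> nat (T - 1) \<le> card (L w - {c})"
  proof
    fix w assume "w \<in> W"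
    then have "int (card (L w)) \<ge> T" using assms(6) unfolding W_def T_def by simp
    then show "finite (L w - {c}) \<and> nat (T - 1) \<le> card (L w - {c})"
      using T by (rule card_Diff_singleton_lower_bound)
  qed
  have bound: "choice_bound_below n" using assms(9) unfolding choice_bound_below_def .
  have "W \<subseteq> V" "card W < n" using card_W assms(1,2) unfolding W_def by auto
  moreover have "colorable W E (k - 1)"
    using colorable_Diff_part[OF assms(4,10)] unfolding W_def .
  moreover have "max (int (k - 1)) \<lceil>(real (card W) + real (k - 1) - 1) / 3\<rceil> \<le> int (nat (T - 1))"
    using ceiling_list_size_bound[OF assms(1,2)] unfolding card_W T_def .
  ultimately obtain f where "L_coloring W E (\<lambda>w. L w - {c}) f"
    using L_coloring_if_choice_bound_below[OF bound assms(3) _ _ _ _ lists] by blast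
  then show False
    using L_coloring_extend_pair[of V u v E L c f] c uv(3) assms(7) unfolding W_def by blast
qed

end
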